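(* Let $A \subseteq \mathbb{N}$ be an arbitrary normal set. Then there exist $x,y,u,v \in A$ such that $x^2 + y^2$ is the square of a natural number and $u^2 - v^2$ is the square of a natural number.
   Context: $\mathbb{N} = \{1,2,3,\dots\}$. An infinite binary sequence $(\lambda_i)_{i \ge 1}$ is called normal if every finite binary word $\omega$ of length $|\omega|$ occurs in the sequence with asymptotic frequency $2^{-|\omega|}$, i.e. the number of $i \le N$ with $(\lambda_i,\dots,\lambda_{i+|\omega|-1}) = \omega$, divided by $N$, tends to $2^{-|\omega|}$ as $N \to \infty$. A set $B \subseteq \mathbb{N}$ is called normal if its indicator sequence ($\lambda_i = 1$ iff $i \in B$) is normal. *)

theory Defs
  imports "HOL-Analysis.Analysis"
begin

text \<open>Positions are indexed from 1 (the paper's convention N = {1,2,3,...}).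
  The word w occurs at position i if lam (i + j) = w ! j for all j < length w.\<close>

definition occ_count :: "(nat \<Rightarrow> bool) \<Rightarrow> bool list \<Rightarrow> nat \<Rightarrow> nat" where
  "occ_count lam w N = card {i \<in> {1..N}. \<forall>j < length w. lam (i + j) = w ! j}"

definition normal_seq :: "(nat \<Rightarrow> bool) \<Rightarrow> bool" where
  "normal_seq lam \<longleftrightarrow>
     (\<forall>w :: bool list. (\<lambda>N. real (occ_count lam w N) / real N)
        \<longlonglongrightarrow> (1 / 2) ^ length w)"

definition normal_set :: "nat set \<Rightarrow> bool" where
  "normal_set B \<longleftrightarrow> B \<subseteq> {1..} \<and> normal_seq (\<lambda>i. i \<in> B)"

end

theory Submission
  imports Defs
begin

text \<open>Each two of 44, 117, 240 are legs of a Pythagorean triple, and each two of 697, 185, 153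
  have a square as difference of squares; so it suffices to find, for positive a, b, c, some k
  with two of a k, b k, c k in A. If there were none, for every k at least two of these would miss A,
  so the three sets of misses along the progressions a\<nat>, b\<nat>, c\<nat> would have total density 2.
  But along any progression c\<nat> the misses of a normal set have upper density at most 1/2:
  a window of length c q contains q positions of each residue class mod c, and averaged over all
  words of that length the number of misses in a class exceeds q/2 by only O(c \<surd>q) in total over the
  classes (a second-moment bound); normality makes the windows of the sequence equidistributed among
  all words, so the same bound holds on average along the sequence.\<close>

definition words :: "nat \<Rightarrow> bool list set" where
  "words n = {w. length w = n}"

lemma finite_words: "finite (words n)"
  using finite_lists_length_eq[of "UNIV :: bool set" n] by (simp add: words_def)

lemma card_words: "card (words n) = 2 ^ n"
  using card_lists_length_eq[of "UNIV :: bool set" n] by (simp add: words_def)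

lemma sum_words_Suc:
  fixes f :: "bool list \<Rightarrow> 'a::comm_monoid_add"
  shows "(\<Sum>w\<in>words (Suc n). f w) = (\<Sum>w\<in>words n. f (True # w) + f (False # w))"
proof -
  have split: "words (Suc n) = (\<lambda>w. True # w) ` words n \<union> (\<lambda>w. False # w) ` words n"
    by (auto simp: words_def length_Suc_conv)
  have "(\<Sum>w\<in>words (Suc n). f w)
      = (\<Sum>w\<in>(\<lambda>w. True # w) ` words n. f w) + (\<Sum>w\<in>(\<lambda>w. False # w) ` words n. f w)"
    unfolding split by (rule sum.union_disjoint) (auto simp: finite_words)
  then show ?thesis
    by (simp add: sum.reindex sum.distrib)
qed

definition window :: "(nat \<Rightarrow> bool) \<Rightarrow> nat \<Rightarrow> nat \<Rightarrow> bool list" where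
  "window lam L i = map (\<lambda>t. lam (i + t)) [0..<L]"

lemma window_in_words: "window lam L i \<in> words L"
  by (simp add: window_def words_def)

lemma window_eq_iff: "length w = L \<Longrightarrow> window lam L i = w \<longleftrightarrow> (\<forall>j<length w. lam (i + j) = w ! j)"
  by (auto simp: window_def list_eq_iff_nth_eq)

lemma sum_window_eq_sum_occ_count:
  fixes f :: "bool list \<Rightarrow> real"
  shows "(\<Sum>i\<in>{1..M}. f (window lam L i)) = (\<Sum>w\<in>words L. real (occ_count lam w M) * f w)"
proof -
  have "(\<Sum>i\<in>{1..M}. f (window lam L i)) = (\<Sum>i\<in>{1..M}. \<Sum>w\<in>words L. of_bool (window lam L i = w) * f w)"
    using window_in_words by (simp add: finite_words sum.delta)
  also have "\<dots> = (\<Sum>w\<in>words L. \<Sum>i\<in>{1..M}. of_bool (window lam L i = w) * f w)"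
    by (rule sum.swap)
  also have "\<dots> = (\<Sum>w\<in>words L. real (occ_count lam w M) * f w)"
  proof (rule sum.cong)
    fix w assume "w \<in> words L"
    then have "{1..M} \<inter> {i. window lam L i = w} = {i \<in> {1..M}. \<forall>j<length w. lam (i + j) = w ! j}"
      by (auto simp: words_def window_eq_iff)
    then show "(\<Sum>i\<in>{1..M}. of_bool (window lam L i = w) * f w) = real (occ_count lam w M) * f w"
      by (simp add: occ_count_def flip: sum_distrib_right)
  qed simp
  finally show ?thesis .
qed

lemma normal_seq_window_mean:
  fixes f :: "bool list \<Rightarrow> real"
  assumes "normal_seq lam"
  shows "(\<lambda>M. (\<Sum>i\<in>{1..M}. f (window lam L i)) / M) \<longlonglongrightarrow> (\<Sum>w\<in>words L. f w) / 2 ^ L"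
proof -
  have "(\<lambda>M. \<Sum>w\<in>words L. real (occ_count lam w M) / M * f w) \<longlonglongrightarrow> (\<Sum>w\<in>words L. (1 / 2) ^ L * f w)"
    using assms unfolding normal_seq_def words_def by (intro tendsto_intros) auto
  then show ?thesis
    unfolding sum_window_eq_sum_occ_count by (simp add: sum_divide_distrib sum_distrib_left power_one_over)
qed

definition false_excess :: "(nat \<Rightarrow> real) \<Rightarrow> bool list \<Rightarrow> real" where
  "false_excess \<phi> w = (\<Sum>t<length w. \<phi> t * (of_bool (\<not> w ! t) - 1 / 2))"

lemma false_excess_Cons:
  "false_excess \<phi> (b # w) = \<phi> 0 * (of_bool (\<not> b) - 1 / 2) + false_excess (\<lambda>t. \<phi> (Suc t)) w"
  unfolding false_excess_def length_Cons sum.lessThan_Suc_shift by simp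

lemma false_excess_window:
  "false_excess \<phi> (window lam L i) = (\<Sum>t<L. \<phi> t * (of_bool (\<not> lam (i + t)) - 1 / 2))"
  by (simp add: false_excess_def window_def)

lemma sum_words_false_excess_squared:
  "(\<Sum>w\<in>words n. (false_excess \<phi> w)\<^sup>2) = 2 ^ n * (\<Sum>t<n. (\<phi> t)\<^sup>2) / 4"
proof (induction n arbitrary: \<phi>)
  case 0
  then show ?case by (simp add: words_def false_excess_def)
next
  case (Suc n)
  have "(\<Sum>w\<in>words (Suc n). (false_excess \<phi> w)\<^sup>2)
      = (\<Sum>w\<in>words n. (\<phi> 0)\<^sup>2 / 2 + 2 * (false_excess (\<lambda>t. \<phi> (Suc t)) w)\<^sup>2)"
    unfolding sum_words_Suc false_excess_Cons by (simp add: power2_eq_square algebra_simps)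
  also have "\<dots> = 2 ^ n * (\<phi> 0)\<^sup>2 / 2 + 2 * (2 ^ n * (\<Sum>t<n. (\<phi> (Suc t))\<^sup>2) / 4)"
    by (simp add: sum.distrib card_words Suc.IH flip: sum_distrib_left)
  finally show ?case
    unfolding sum.lessThan_Suc_shift by (simp add: algebra_simps)
qed

lemma abs_le_square_plus: "0 < a \<Longrightarrow> \<bar>y :: real\<bar> \<le> y\<^sup>2 / (2 * a) + a / 2"
  using sum_squares_bound[of "\<bar>y\<bar>" a] by (simp add: field_simps power2_eq_square)

lemma sum_words_abs_false_excess_le:
  assumes "0 < a"
  shows "(\<Sum>w\<in>words n. \<bar>false_excess \<phi> w\<bar>) \<le> 2 ^ n * ((\<Sum>t<n. (\<phi> t)\<^sup>2) / (8 * a) + a / 2)"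
proof -
  have "(\<Sum>w\<in>words n. \<bar>false_excess \<phi> w\<bar>) \<le> (\<Sum>w\<in>words n. (false_excess \<phi> w)\<^sup>2 / (2 * a) + a / 2)"
    using assms by (intro sum_mono abs_le_square_plus)
  also have "\<dots> = 2 ^ n * ((\<Sum>t<n. (\<phi> t)\<^sup>2) / (8 * a) + a / 2)"
    by (simp add: sum.distrib card_words sum_words_false_excess_squared field_simps flip: sum_divide_distrib)
  finally show ?thesis .
qed

lemma sum_residue_class_le:
  fixes c q s :: nat
  assumes "0 < c"
  shows "(\<Sum>t<c * q. of_bool (c dvd s + t) :: real) \<le> q"
proof -
  let ?T = "{..<c * q} \<inter> {t. c dvd s + t}"
  have "inj_on (\<lambda>t. t div c) ?T"
  proof (rule inj_onI)
    fix x y :: nat assume "x \<in> ?T" "y \<in> ?T" "x div c = y div c"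
    moreover from \<open>x \<in> ?T\<close> \<open>y \<in> ?T\<close> have "x mod c = y mod c"
      by simp (metis Nat.diff_cancel dvd_diff_nat mod_eq_dvd_iff_nat nat_le_linear)
    ultimately show "x = y"
      by (metis div_mult_mod_eq)
  qed
  moreover have "(\<lambda>t. t div c) ` ?T \<subseteq> {..<q}"
    using assms by (auto simp: div_less_iff_less_mult mult.commute)
  ultimately have "card ?T \<le> q"
    by (metis card_inj_on_le card_lessThan finite_lessThan)
  then show ?thesis by simp
qed

text \<open>A word does not know the residue mod c of the position where it starts, so this bounds the
  misses in every residue class at once.\<close>

definition miss_bound :: "nat \<Rightarrow> nat \<Rightarrow> bool list \<Rightarrow> real" where
  "miss_bound c q w = q / 2 + (\<Sum>s<c. \<bar>false_excess (\<lambda>t. of_bool (c dvd s + t)) w\<bar>)"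

lemma sum_progression_misses_le_miss_bound:
  assumes "0 < c"
  shows "(\<Sum>t<c * q. of_bool (c dvd i + t \<and> \<not> lam (i + t))) \<le> miss_bound c q (window lam (c * q) i)"
proof -
  define s where "s = i mod c"
  define \<phi> where "\<phi> t = (of_bool (c dvd s + t) :: real)" for t
  have "s < c" using assms by (simp add: s_def)
  have "c dvd i + t \<longleftrightarrow> c dvd s + t" for t
    by (simp add: s_def dvd_eq_mod_eq_0 mod_add_left_eq)
  then have "(\<Sum>t<c * q. of_bool (c dvd i + t \<and> \<not> lam (i + t)))
      = (\<Sum>t<c * q. \<phi> t * (1 / 2 + (of_bool (\<not> lam (i + t)) - 1 / 2)))"
    by (intro sum.cong) (auto simp: \<phi>_def)
  also have "\<dots> = (\<Sum>t<c * q. \<phi> t / 2 + \<phi> t * (of_bool (\<not> lam (i + t)) - 1 / 2))"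
    by (intro sum.cong) (simp_all add: algebra_simps)
  also have "\<dots> = (\<Sum>t<c * q. \<phi> t) / 2 + false_excess \<phi> (window lam (c * q) i)"
    by (simp only: sum.distrib false_excess_window sum_divide_distrib)
  also have "\<dots> \<le> q / 2 + \<bar>false_excess \<phi> (window lam (c * q) i)\<bar>"
    using sum_residue_class_le[OF assms, where q=q and s=s] by (simp add: \<phi>_def)
  also have "\<dots> \<le> miss_bound c q (window lam (c * q) i)"
    unfolding miss_bound_def \<phi>_def using \<open>s < c\<close> by (intro add_left_mono member_le_sum) auto
  finally show ?thesis .
qed

lemma sum_words_miss_bound_le:
  assumes "0 < c" and "0 < a"
  shows "(\<Sum>w\<in>words (c * q). miss_bound c q w) \<le> 2 ^ (c * q) * (q / 2 + c * (q / (8 * a) + a / 2))"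
proof -
  let ?\<phi> = "\<lambda>s t. of_bool (c dvd s + t) :: real"
  have each: "(\<Sum>w\<in>words (c * q). \<bar>false_excess (?\<phi> s) w\<bar>) \<le> 2 ^ (c * q) * (q / (8 * a) + a / 2)" for s
  proof -
    have "(\<Sum>t<c * q. (?\<phi> s t)\<^sup>2) \<le> q"
      using sum_residue_class_le[OF assms(1), where q=q and s=s] by (simp add: power2_eq_square)
    then have "(\<Sum>t<c * q. (?\<phi> s t)\<^sup>2) / (8 * a) \<le> q / (8 * a)"
      using assms(2) by (simp add: divide_right_mono)
    then show ?thesis
      using sum_words_abs_false_excess_le[OF assms(2), where n="c * q" and \<phi>="?\<phi> s"]
      by (smt (verit) mult_left_mono zero_le_power)
  qed
  have "(\<Sum>w\<in>words (c * q). miss_bound c q w)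
      = 2 ^ (c * q) * (q / 2) + (\<Sum>s<c. \<Sum>w\<in>words (c * q). \<bar>false_excess (?\<phi> s) w\<bar>)"
    unfolding miss_bound_def sum.distrib by (simp add: card_words sum.swap[of _ "words (c * q)" "{..<c}"])
  also have "\<dots> \<le> 2 ^ (c * q) * (q / 2) + (\<Sum>s<c. 2 ^ (c * q) * (q / (8 * a) + a / 2))"
    by (intro add_left_mono sum_mono each)
  finally show ?thesis
    by (simp add: algebra_simps)
qed

lemma sum_le_sum_sliding_windows:
  fixes f :: "nat \<Rightarrow> real"
  assumes f0: "\<And>j. 0 \<le> f j" and f1: "\<And>j. f j \<le> 1"
  shows "real L * (\<Sum>j\<in>{1..M}. f j) \<le> real L * real L + (\<Sum>i\<in>{1..M}. \<Sum>t<L. f (i + t))"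
proof -
  have shifted: "(\<Sum>j\<in>{1..M}. f j) \<le> L + (\<Sum>i\<in>{1..M}. f (i + t))" if "t < L" for t
  proof -
    have "(\<Sum>j\<in>{1..M}. f j) \<le> (\<Sum>j\<in>{1..t} \<union> {1 + t..M + t}. f j)"
      by (rule sum_mono2) (auto simp: f0)
    also have "\<dots> = (\<Sum>j\<in>{1..t}. f j) + (\<Sum>j\<in>{1 + t..M + t}. f j)"
      by (rule sum.union_disjoint) auto
    also have "(\<Sum>j\<in>{1..t}. f j) \<le> t"
      using sum_mono[of "{1..t}" f "\<lambda>_. 1"] f1 by simp
    also have "(\<Sum>j\<in>{1 + t..M + t}. f j) = (\<Sum>i\<in>{1..M}. f (i + t))"
      by (rule sum.shift_bounds_cl_nat_ivl)
    finally show ?thesis using that by simp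
  qed
  have "real L * (\<Sum>j\<in>{1..M}. f j) = (\<Sum>t<L. \<Sum>j\<in>{1..M}. f j)"
    by simp
  also have "\<dots> \<le> (\<Sum>t<L. L + (\<Sum>i\<in>{1..M}. f (i + t)))"
    by (intro sum_mono shifted) simp
  also have "\<dots> = real L * real L + (\<Sum>i\<in>{1..M}. \<Sum>t<L. f (i + t))"
    by (simp add: sum.distrib sum.swap[of _ "{..<L}"])
  finally show ?thesis .
qed

lemma normal_seq_upper_density_le:
  fixes f :: "nat \<Rightarrow> real" and G :: "bool list \<Rightarrow> real" and \<beta> :: real
  assumes "normal_seq lam" and "0 < L"
    and f0: "\<And>j. 0 \<le> f j" and f1: "\<And>j. f j \<le> 1"
    and G: "\<And>i. (\<Sum>t<L. f (i + t)) \<le> G (window lam L i)"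
    and mean: "(\<Sum>w\<in>words L. G w) / 2 ^ L < L * \<beta>"
  shows "\<forall>\<^sub>F M in sequentially. (\<Sum>j\<in>{1..M}. f j) \<le> \<beta> * M"
proof -
  have "(\<lambda>M. real L * real L / M + (\<Sum>i\<in>{1..M}. G (window lam L i)) / M) \<longlonglongrightarrow> 0 + (\<Sum>w\<in>words L. G w) / 2 ^ L"
    using normal_seq_window_mean[OF assms(1)] by (intro tendsto_add lim_const_over_n)
  then have "\<forall>\<^sub>F M in sequentially. real L * real L / M + (\<Sum>i\<in>{1..M}. G (window lam L i)) / M < L * \<beta>"
    using mean by (simp add: order_tendstoD(2))
  then show ?thesis
    using eventually_gt_at_top[of 0]
  proof eventually_elim
    case (elim M)
    have "L * (\<Sum>j\<in>{1..M}. f j) \<le> real L * real L + (\<Sum>i\<in>{1..M}. \<Sum>t<L. f (i + t))"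
      using f0 f1 by (rule sum_le_sum_sliding_windows)
    also have "\<dots> \<le> real L * real L + (\<Sum>i\<in>{1..M}. G (window lam L i))"
      using G by (intro add_left_mono sum_mono)
    also have "\<dots> = M * (real L * real L / M + (\<Sum>i\<in>{1..M}. G (window lam L i)) / M)"
      using elim(2) by (simp add: field_simps)
    also have "\<dots> < M * (L * \<beta>)"
      using elim by (intro mult_strict_left_mono) simp_all
    finally show ?case
      using \<open>0 < L\<close> by (simp add: algebra_simps)
  qed
qed

lemma sum_multiples_eq:
  fixes c N :: nat
  assumes "0 < c"
  shows "(\<Sum>j\<in>{1..c * N}. of_bool (c dvd j \<and> P j) :: real) = (\<Sum>k=1..N. of_bool (P (c * k)))"
proof -
  have multiples: "{j \<in> {1..c * N}. c dvd j} = (\<lambda>k. c * k) ` {1..N}"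
  proof
    show "(\<lambda>k. c * k) ` {1..N} \<subseteq> {j \<in> {1..c * N}. c dvd j}"
      using assms by auto
    show "{j \<in> {1..c * N}. c dvd j} \<subseteq> (\<lambda>k. c * k) ` {1..N}"
    proof
      fix j assume "j \<in> {j \<in> {1..c * N}. c dvd j}"
      then obtain k where "j = c * k" "1 \<le> c * k" "c * k \<le> c * N"
        by auto
      then show "j \<in> (\<lambda>k. c * k) ` {1..N}"
        using assms by (auto simp: Suc_le_eq)
    qed
  qed
  have "(\<Sum>j\<in>{1..c * N}. of_bool (c dvd j \<and> P j) :: real) = (\<Sum>j\<in>{1..c * N}. if c dvd j then of_bool (P j) else 0)"
    by (intro sum.cong) auto
  also have "\<dots> = (\<Sum>j\<in>{j \<in> {1..c * N}. c dvd j}. of_bool (P j))"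
    by (simp only: sum.inter_filter[OF finite_atLeastAtMost])
  also have "\<dots> = (\<Sum>k=1..N. of_bool (P (c * k)))"
    unfolding multiples using assms by (subst sum.reindex) (auto simp: inj_on_def)
  finally show ?thesis .
qed

lemma normal_seq_multiples_density:
  assumes "normal_seq lam" and "0 < c" and "0 < \<epsilon>"
  shows "\<forall>\<^sub>F N in sequentially. (\<Sum>k=1..N. of_bool (\<not> lam (c * k))) \<le> (1 / 2 + \<epsilon>) * N"
proof -
  define q :: nat where "q = nat \<lceil>(c / \<epsilon>)\<^sup>2\<rceil> + 1"
  define a where "a = \<epsilon> * q / (2 * c)"
  \<comment> \<open>With this a the bound of sum_words_miss_bound_le becomes q/2 + c^2/(4\<epsilon>) + \<epsilon> q/4,
    and q is large enough for c^2/(4\<epsilon>) to be absorbed by the remaining 3\<epsilon> q/4.\<close>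
  have "0 < q"
    by (simp add: q_def)
  then have "0 < a"
    using assms by (simp add: a_def)
  have "(c / \<epsilon>)\<^sup>2 < q"
    unfolding q_def by linarith
  then have c_small: "c\<^sup>2 < \<epsilon>\<^sup>2 * q"
    using assms by (simp add: field_simps power_divide)
  have mean: "(\<Sum>w\<in>words (c * q). miss_bound c q w) / 2 ^ (c * q) < real (c * q) * ((1 / 2 + \<epsilon>) / c)"
  proof -
    have "(\<Sum>w\<in>words (c * q). miss_bound c q w) / 2 ^ (c * q) \<le> q / 2 + c * (q / (8 * a) + a / 2)"
      using sum_words_miss_bound_le[OF \<open>0 < c\<close> \<open>0 < a\<close>, of q] by (simp add: field_simps)
    also have "\<dots> = q / 2 + c\<^sup>2 / (4 * \<epsilon>) + \<epsilon> * q / 4"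
      using assms \<open>0 < q\<close> by (simp add: a_def field_simps power2_eq_square)
    also have "\<dots> < (1 / 2 + \<epsilon>) * q"
    proof -
      have "0 \<le> \<epsilon>\<^sup>2 * q"
        by simp
      then have "c\<^sup>2 < 3 * (\<epsilon>\<^sup>2 * q)"
        using c_small by linarith
      then show ?thesis
        using assms by (simp add: field_simps power2_eq_square)
    qed
    also have "\<dots> = real (c * q) * ((1 / 2 + \<epsilon>) / c)"
      using assms by simp
    finally show ?thesis .
  qed
  have "\<forall>\<^sub>F M in sequentially. (\<Sum>j\<in>{1..M}. of_bool (c dvd j \<and> \<not> lam j)) \<le> (1 / 2 + \<epsilon>) / c * M"
    using assms(1) _ _ _ sum_progression_misses_le_miss_bound[OF \<open>0 < c\<close>] mean
    by (rule normal_seq_upper_density_le) (use assms \<open>0 < q\<close> in auto)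
  then have "\<forall>\<^sub>F N in sequentially. (\<Sum>j\<in>{1..c * N}. of_bool (c dvd j \<and> \<not> lam j)) \<le> (1 / 2 + \<epsilon>) / c * (c * N)"
    using mult_nat_left_at_top[OF \<open>0 < c\<close>] by (rule eventually_compose_filterlim)
  then show ?thesis
    using assms by (simp only: sum_multiples_eq) simp
qed

lemma normal_seq_two_of_three_multiples:
  assumes "normal_seq lam" and "0 < a" and "0 < b" and "0 < c"
  shows "\<exists>k\<ge>1. (lam (a * k) \<and> lam (b * k)) \<or> (lam (a * k) \<and> lam (c * k)) \<or> (lam (b * k) \<and> lam (c * k))"
proof (rule ccontr)
  assume none: "\<not> ?thesis"
  let ?misses = "\<lambda>d N. \<Sum>k=1..N. of_bool (\<not> lam (d * k)) :: real"
  have "\<forall>\<^sub>F N in sequentially. ?misses a N \<le> 7 / 12 * N \<and> ?misses b N \<le> 7 / 12 * N \<and> ?misses c N \<le> 7 / 12 * N \<and> 0 < N"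
    using normal_seq_multiples_density[OF assms(1), of _ "1 / 12"] assms
    by (intro eventually_conj eventually_gt_at_top) auto
  then obtain N where "?misses a N \<le> 7 / 12 * N" "?misses b N \<le> 7 / 12 * N" "?misses c N \<le> 7 / 12 * N"
    and "0 < N"
    using eventually_happens'[OF sequentially_bot] by blast
  have "(\<Sum>k=1..N. 2 :: real) \<le> (\<Sum>k=1..N. of_bool (\<not> lam (a * k)) + of_bool (\<not> lam (b * k)) + of_bool (\<not> lam (c * k)))"
    using none by (intro sum_mono) auto
  then have "2 * N \<le> ?misses a N + ?misses b N + ?misses c N"
    by (simp add: sum.distrib)
  with \<open>0 < N\<close> show False
    using \<open>?misses a N \<le> 7 / 12 * N\<close> \<open>?misses b N \<le> 7 / 12 * N\<close> \<open>?misses c N \<le> 7 / 12 * N\<close>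
    by simp
qed

lemma normal_set_related_pair:
  assumes "normal_seq (\<lambda>i. i \<in> A)" and "0 < a" and "0 < b" and "0 < c"
    and "\<And>k. k \<ge> 1 \<Longrightarrow> R (a * k) (b * k) \<and> R (a * k) (c * k) \<and> R (b * k) (c * k)"
  shows "\<exists>x\<in>A. \<exists>y\<in>A. R x y"
  using normal_seq_two_of_three_multiples[OF assms(1-4)] assms(5) by blast

theorem mainTheorem6:
  fixes A :: "nat set"
  assumes "normal_set A"
  shows "\<exists>x\<in>A. \<exists>y\<in>A. \<exists>u\<in>A. \<exists>v\<in>A.
           (\<exists>z::nat. z \<ge> 1 \<and> x^2 + y^2 = z^2) \<and>
           (\<exists>w::nat. w \<ge> 1 \<and> int u^2 - int v^2 = int w^2)"
proof -
  have normal: "normal_seq (\<lambda>i. i \<in> A)"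
    using assms by (simp add: normal_set_def)
  have "\<exists>x\<in>A. \<exists>y\<in>A. \<exists>z::nat. z \<ge> 1 \<and> x^2 + y^2 = z^2"
    by (rule normal_set_related_pair[OF normal, of 44 117 240])
      (auto simp: power_mult_distrib intro: exI[where x="125 * _"] exI[where x="244 * _"] exI[where x="267 * _"])
  moreover have "\<exists>u\<in>A. \<exists>v\<in>A. \<exists>w::nat. w \<ge> 1 \<and> int u^2 - int v^2 = int w^2"
    by (rule normal_set_related_pair[OF normal, of 697 185 153])
      (auto simp: power_mult_distrib intro: exI[where x="672 * _"] exI[where x="680 * _"] exI[where x="104 * _"])
  ultimately show ?thesis
    by blast
qed

end
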